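(* Let $Q\in\mathrm{St}(n,r)$ and $\mathcal{I}=\{(i,j):V_{ij}=0\ \text{for all } V\in T_Q\mathrm{St}(n,r)\}$. Then: (i) if $(i,j)\in\mathcal{I}$, then $Q_{ij}\in\{\pm1\}$; (ii) if $(i,j)\notin\mathcal{I}$, then the set $\mathcal{Z}_{ij}:=\{Z\in\mathbb{R}^{n\times r}:(\mathbf{P}_QZ)_{ij}=0\}$ has zero Lebesgue measure.
   Context: $\mathrm{St}(n,r)=\{Q\in\mathbb{R}^{n\times r}:Q^\top Q=I_r\}$ is the Stiefel manifold, with tangent space $T_Q\mathrm{St}(n,r)=\{V\in\mathbb{R}^{n\times r}:Q^\top V+V^\top Q=0\}$, and $\mathbf{P}_Q(Z)=Z-Q(Q^\top Z+Z^\top Q)/2$ is the orthogonal projection of $Z\in\mathbb{R}^{n\times r}$ onto $T_Q\mathrm{St}(n,r)$. *)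

theory Defs
  imports "HOL-Analysis.Analysis"
begin

text \<open>n x r real matrices are represented as real^'r^'n (rows indexed by 'n, columns by 'r).\<close>

definition stiefel :: "(real^'r^'n) set" where
  "stiefel = {Q. transpose Q ** Q = mat 1}"

definition tangent_stiefel :: "real^'r^'n \<Rightarrow> (real^'r^'n) set" where
  "tangent_stiefel Q = {V. transpose Q ** V + transpose V ** Q = 0}"

definition proj_stiefel :: "real^'r^'n \<Rightarrow> real^'r^'n \<Rightarrow> real^'r^'n" where
  "proj_stiefel Q Z = Z - Q ** ((1/2) *\<^sub>R (transpose Q ** Z + transpose Z ** Q))"

end

theory Submission
  imports Defs
begin

text \<open>
  If the entry \<open>(i, j)\<close> vanishes on the whole
  tangent space, testing it on the tangent vectors \<open>Q (E\<^sub>k\<^sub>j - E\<^sub>j\<^sub>k)\<close>, \<open>k \<noteq> j\<close>, shows that row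
  \<open>i\<close> of \<open>Q\<close> is supported in column \<open>j\<close>; testing it on \<open>P\<^sub>Q E\<^sub>i\<^sub>j\<close> then gives
  \<open>0 = 1 - (|Q\<^sub>i|\<^sup>2 + Q\<^sub>i\<^sub>j\<^sup>2)/2 = 1 - Q\<^sub>i\<^sub>j\<^sup>2\<close>. Otherwise some tangent \<open>V\<close> has \<open>V\<^sub>i\<^sub>j \<noteq> 0\<close>,
  and since \<open>P\<^sub>Q V = V\<close> the map \<open>Z \<mapsto> (P\<^sub>Q Z)\<^sub>i\<^sub>j\<close> is a nonzero linear functional, whose
  zero set is a hyperplane.
\<close>

lemma transpose_add: "transpose (A + B) = transpose A + transpose (B :: 'a::ring^'m^'n)"
  by (simp add: transpose_def vec_eq_iff)

lemma transpose_diff: "transpose (A - B) = transpose A - transpose (B :: 'a::ring^'m^'n)"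
  by (simp add: transpose_def vec_eq_iff)

lemma matrix_diff_ldistrib: "(A :: 'a::ring_1^'m^'n) ** (B - C) = A ** B - A ** C"
  by (simp add: matrix_matrix_mult_def vec_eq_iff sum_subtractf algebra_simps)

lemma matrix_add_rdistrib: "((A :: 'a::ring_1^'m^'n) + B) ** C = A ** C + B ** C"
  by (simp add: matrix_matrix_mult_def vec_eq_iff sum.distrib algebra_simps)

lemma matrix_diff_rdistrib: "((A :: 'a::ring_1^'m^'n) - B) ** C = A ** C - B ** C"
  by (simp add: matrix_matrix_mult_def vec_eq_iff sum_subtractf algebra_simps)

lemma matrix_scaleR_left: "(c *\<^sub>R (A :: real^'m^'n)) ** B = c *\<^sub>R (A ** B)"
  by (simp add: scalar_matrix_assoc)

lemma matrix_scaleR_right: "(A :: real^'m^'n) ** (c *\<^sub>R B) = c *\<^sub>R (A ** B)"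
  by (simp add: matrix_scalar_ac scalar_matrix_assoc)

lemma matrix_mul_component: "(A ** B) $ i $ j = (\<Sum>k\<in>UNIV. A $ i $ k * B $ k $ j)"
  by (simp add: matrix_matrix_mult_def)

definition matrix_unit :: "'n \<Rightarrow> 'm \<Rightarrow> 'a::zero_neq_one^'m^'n" where
  "matrix_unit i j = (\<chi> a b. if a = i \<and> b = j then 1 else 0)"

lemma matrix_unit_component [simp]:
  "matrix_unit i j $ a $ b = (if a = i \<and> b = j then 1 else 0)"
  by (simp add: matrix_unit_def)

lemma transpose_matrix_unit [simp]: "transpose (matrix_unit i j) = matrix_unit j i"
  by (auto simp: transpose_def vec_eq_iff)

lemma matrix_mul_matrix_unit_component:
  fixes A :: "'a::semiring_1^'m^'n"
  shows "(A ** matrix_unit k l) $ i $ j = (if j = l then A $ i $ k else 0)"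
  by (simp add: matrix_mul_component if_distrib cong: if_cong)

lemma matrix_unit_mul_component:
  fixes A :: "'a::semiring_1^'m^'n"
  shows "(matrix_unit k l ** A) $ i $ j = (if i = k then A $ l $ j else 0)"
  by (simp add: matrix_mul_component if_distrib if_distribR cong: if_cong)

lemma negligible_linear_functional_zero_set:
  fixes f :: "'a::euclidean_space \<Rightarrow> real"
  assumes "linear f" and "f v \<noteq> 0"
  shows "negligible {x. f x = 0}"
proof -
  have representer: "f x = adjoint f 1 \<bullet> x" for x
    using adjoint_works[OF assms(1), of x 1] by (simp add: inner_commute)
  then have "adjoint f 1 \<noteq> 0"
    using assms(2) by auto
  then show ?thesis
    using negligible_hyperplane[of "adjoint f 1" 0] by (simp add: representer)
qed

lemma stiefel_iff: "Q \<in> stiefel \<longleftrightarrow> transpose Q ** Q = mat 1"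
  by (simp add: stiefel_def)

lemma proj_stiefel_in_tangent:
  assumes "Q \<in> stiefel"
  shows "proj_stiefel Q Z \<in> tangent_stiefel Q"
proof -
  have QQ: "transpose Q ** Q = mat 1"
    using assms by (simp add: stiefel_iff)
  define M where "M = (1/2) *\<^sub>R (transpose Q ** Z + transpose Z ** Q)"
  have "transpose M = M"
    by (simp add: M_def transpose_scalar matrix_transpose_mul transpose_add add.commute)
  then have "transpose (Q ** M) ** Q = M"
    by (simp add: matrix_transpose_mul QQ flip: matrix_mul_assoc)
  moreover have "transpose Q ** (Q ** M) = M"
    by (simp add: matrix_mul_assoc QQ)
  ultimately have "transpose Q ** (Z - Q ** M) + transpose (Z - Q ** M) ** Q
      = (transpose Q ** Z + transpose Z ** Q) - (M + M)"
    by (simp add: matrix_diff_ldistrib matrix_diff_rdistrib transpose_diff)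
  also have "M + M = transpose Q ** Z + transpose Z ** Q"
    by (simp add: M_def flip: scaleR_left_distrib)
  finally show ?thesis
    by (simp add: tangent_stiefel_def proj_stiefel_def flip: M_def)
qed

lemma proj_stiefel_tangent:
  assumes "V \<in> tangent_stiefel Q"
  shows "proj_stiefel Q V = V"
  using assms by (simp add: tangent_stiefel_def proj_stiefel_def)

lemma linear_proj_stiefel: "linear (proj_stiefel Q)"
proof (rule linearI)
  show "proj_stiefel Q (X + Y) = proj_stiefel Q X + proj_stiefel Q Y" for X Y
    by (simp add: proj_stiefel_def transpose_add matrix_add_ldistrib matrix_add_rdistrib
        algebra_simps)
  show "proj_stiefel Q (c *\<^sub>R X) = c *\<^sub>R proj_stiefel Q X" for c X
    by (simp add: proj_stiefel_def transpose_scalar matrix_scaleR_left matrix_scaleR_right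
        matrix_add_ldistrib algebra_simps)
qed

lemma stiefel_mul_skew_in_tangent:
  assumes "Q \<in> stiefel" and "transpose A = - A"
  shows "Q ** A \<in> tangent_stiefel Q"
proof -
  have QQ: "transpose Q ** Q = mat 1"
    using assms(1) by (simp add: stiefel_iff)
  have "transpose Q ** (Q ** A) = A"
    by (simp add: matrix_mul_assoc QQ)
  moreover have "transpose (Q ** A) ** Q = - A"
    using assms(2) by (simp add: matrix_transpose_mul QQ flip: matrix_mul_assoc)
  ultimately show ?thesis
    by (simp add: tangent_stiefel_def)
qed

lemma stiefel_row_vanishes_off_column:
  fixes Q :: "real^'r^'n"
  assumes "Q \<in> stiefel" and "\<forall>V \<in> tangent_stiefel Q. V $ i $ j = 0" and "k \<noteq> j"
  shows "Q $ i $ k = 0"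
proof -
  define A :: "real^'r^'r" where "A = matrix_unit k j - matrix_unit j k"
  have "transpose A = - A"
    by (simp add: A_def transpose_diff)
  then have "(Q ** A) $ i $ j = 0"
    using assms(1,2) stiefel_mul_skew_in_tangent by blast
  then show ?thesis
    using assms(3) by (simp add: A_def matrix_diff_ldistrib matrix_mul_matrix_unit_component)
qed

lemma proj_stiefel_matrix_unit_diagonal_component:
  fixes Q :: "real^'r^'n"
  shows "proj_stiefel Q (matrix_unit i j) $ i $ j
    = 1 - ((\<Sum>k\<in>UNIV. (Q $ i $ k)\<^sup>2) + (Q $ i $ j)\<^sup>2) / 2"
proof -
  have "(Q ** (transpose Q ** matrix_unit i j)) $ i $ j = (Q ** transpose Q) $ i $ i"
    by (simp add: matrix_mul_assoc matrix_mul_matrix_unit_component)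
  also have "\<dots> = (\<Sum>k\<in>UNIV. (Q $ i $ k)\<^sup>2)"
    by (simp add: matrix_mul_component transpose_def power2_eq_square)
  moreover have "(Q ** (matrix_unit j i ** Q)) $ i $ j = (Q $ i $ j)\<^sup>2"
    by (simp add: matrix_mul_component[of Q] matrix_unit_mul_component power2_eq_square
        if_distrib cong: if_cong)
  ultimately show ?thesis
    by (simp add: proj_stiefel_def matrix_scaleR_right matrix_add_ldistrib)
qed

theorem proposition4p3:
  fixes Q :: "real^'r^'n"
  assumes "Q \<in> stiefel"
  defines "\<I> \<equiv> {(i, j). \<forall>V \<in> tangent_stiefel Q. V $ i $ j = 0}"
  shows "(\<forall>i j. (i, j) \<in> \<I> \<longrightarrow> Q $ i $ j \<in> {1, -1}) \<and>
         (\<forall>i j. (i, j) \<notin> \<I> \<longrightarrow>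
           {Z :: real^'r^'n. proj_stiefel Q Z $ i $ j = 0} \<in> null_sets lebesgue)"
proof (intro conjI allI impI)
  fix i j
  assume "(i, j) \<in> \<I>"
  then have vanish: "\<forall>V \<in> tangent_stiefel Q. V $ i $ j = 0"
    by (simp add: \<I>_def)
  have "(\<Sum>k\<in>UNIV. (Q $ i $ k)\<^sup>2) = (Q $ i $ j)\<^sup>2"
    using stiefel_row_vanishes_off_column[OF assms(1) vanish]
    by (subst sum.remove[of _ j]) auto
  moreover have "proj_stiefel Q (matrix_unit i j) $ i $ j = 0"
    using vanish proj_stiefel_in_tangent[OF assms(1)] by blast
  ultimately have "(Q $ i $ j)\<^sup>2 = 1"
    by (simp add: proj_stiefel_matrix_unit_diagonal_component)
  then show "Q $ i $ j \<in> {1, -1}"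
    by (simp add: power2_eq_1_iff)
next
  fix i j
  assume "(i, j) \<notin> \<I>"
  then obtain V where "V \<in> tangent_stiefel Q" and "V $ i $ j \<noteq> 0"
    by (auto simp: \<I>_def)
  then have "proj_stiefel Q V $ i $ j \<noteq> 0"
    by (simp add: proj_stiefel_tangent)
  moreover have "linear (\<lambda>Z. proj_stiefel Q Z $ i $ j)"
    using linear_compose[OF linear_proj_stiefel, of "\<lambda>V. V $ i $ j"]
    by (simp add: o_def linear_iff)
  ultimately show "{Z :: real^'r^'n. proj_stiefel Q Z $ i $ j = 0} \<in> null_sets lebesgue"
    using negligible_linear_functional_zero_set negligible_iff_null_sets by blast
qed

end
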